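(* Let $\zeta_1,\ldots,\zeta_n$ be independent Bernoulli random variables with $p_i=1-q_i=\mathbb{P}(\zeta_i=1)$, and $V_2=\sum_{i=1}^n\zeta_i$. Let $r>1$, $p\in(0,1)$, $q=1-p$ with $rq=p\sum_{i=1}^np_i$. Then $$\sup_{z\ge0}|\mathbb{E}[\mathscr{A}g_z(V_2)]|\le\left(2p^{-(r+1)}-p^{-1}\right)\sum_{i=1}^np_i(1-pq_i).$$
   Context: $x^+=\max\{x,0\}$. $\mathrm{N}_{r,p}$ is negative binomial with $\mathbb{P}(\mathrm{N}_{r,p}=k)=\binom{r+k-1}{k}p^rq^k$, $k\in\mathbb{Z}_+$. The Stein operator is $\mathscr{A}g(k)=q(r+k)g(k+1)-kg(k)$. For $z\ge0$, $g_z(0)=0$ and for $k\ge1$, $g_z(k)=-\sum_{j\ge k}\frac{r(r+1)\cdots(r+j-1)}{r(r+1)\cdots(r+k-1)}\frac{(k-1)!}{j!}q^{j-k}\big[(j-z)^+-\mathbb{E}[(\mathrm{N}_{r,p}-z)^+]\big]$, so that $\mathbb{E}[\mathscr{A}g_z(V)]=\mathbb{E}[(V-z)^+]-\mathbb{E}[(\mathrm{N}_{r,p}-z)^+]$. *)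

theory Defs
  imports "HOL-Probability.Probability"
begin

text \<open>Negative binomial pmf: P(N_{r,p} = k) = binom(r+k-1,k) p^r q^k,
  with binom(r+k-1,k) = r(r+1)...(r+k-1)/k! = pochhammer r k / k!.\<close>
definition negbin_prob :: "real \<Rightarrow> real \<Rightarrow> nat \<Rightarrow> real" where
  "negbin_prob r p k = pochhammer r k / fact k * p powr r * (1 - p) ^ k"

definition negbin_call :: "real \<Rightarrow> real \<Rightarrow> real \<Rightarrow> real" where
  "negbin_call r p z = (\<Sum>k. negbin_prob r p k * max (real k - z) 0)"

definition stein_g :: "real \<Rightarrow> real \<Rightarrow> real \<Rightarrow> nat \<Rightarrow> real" where
  "stein_g r p z k = (if k = 0 then 0 else
     - (\<Sum>m. (let j = k + m in
          pochhammer r j / pochhammer r k * fact (k - 1) / fact j * (1 - p) ^ (j - k)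
          * (max (real j - z) 0 - negbin_call r p z))))"

definition stein_op :: "real \<Rightarrow> real \<Rightarrow> (nat \<Rightarrow> real) \<Rightarrow> nat \<Rightarrow> real" where
  "stein_op r p g k = (1 - p) * (r + real k) * g (k + 1) - real k * g k"

definition bern_sum_pmf :: "nat \<Rightarrow> (nat \<Rightarrow> real) \<Rightarrow> nat pmf" where
  "bern_sum_pmf n ps = map_pmf (\<lambda>\<omega>. \<Sum>i\<in>{1..n}. of_bool (\<omega> i))
      (Pi_pmf {1..n} False (\<lambda>i. bernoulli_pmf (ps i)))"

end

theory Submission
  imports Defs
begin

text \<open>Let \<pi> be the law of N = N_{r,p}. For k \<ge> 1 the Stein solution is the ratio
  g_z(k) = S_k / (k \<pi>(k)), where S_k = \<Sum>_{j<k} \<pi>(j) ((j - z)^+ - E(N - z)^+).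
  Partial sums of a centred increasing function are nonpositive (a Chebyshev-type inequality),
  so S_k \<le> 0. Writing (j - z)^+ = j - min j z and using the telescoping identity
  \<Sum>_{j<k} \<pi>(j) (j - EN) = - k \<pi>(k) / p gives S_k \<ge> - k \<pi>(k) / p. Hence -1/p \<le> g_z \<le> 0 on the
  positive integers, and the increments of g_z are bounded by 1/p.
  For the Bernoulli sum V, conditioning on each \<zeta>_i and using r q = p \<Sum> p_i turns
  E[A g(V)] into \<Sum> p_i (1 - p q_i) E[g(V - \<zeta>_i + 2) - g(V - \<zeta>_i + 1)], so the bound 1/p
  on the increments gives the claim since 1/p \<le> 2 p^-(r+1) - 1/p.\<close>

lemma centered_sums_zero:
  fixes w f :: "nat \<Rightarrow> real"
  assumes "w sums 1" and "summable (\<lambda>j. w j * f j)"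
  shows "(\<lambda>j. w j * (f j - (\<Sum>j. w j * f j))) sums 0"
proof -
  have "(\<lambda>j. w j * f j - w j * (\<Sum>j. w j * f j)) sums ((\<Sum>j. w j * f j) - 1 * (\<Sum>j. w j * f j))"
    using assms by (intro sums_diff summable_sums sums_mult2)
  then show ?thesis by (simp add: right_diff_distrib)
qed

lemma partial_sum_centered_mono_nonpos:
  fixes w f :: "nat \<Rightarrow> real"
  assumes w: "\<And>j. w j \<ge> 0" and ws: "w sums 1" and wf: "summable (\<lambda>j. w j * f j)"
    and mono: "mono f"
  shows "(\<Sum>j<k. w j * (f j - (\<Sum>j. w j * f j))) \<le> 0"
proof -
  define E where "E = (\<Sum>j. w j * f j)"
  define c where "c = (\<lambda>j. w j * (f j - E))"
  have c0: "c sums 0" unfolding c_def E_def using centered_sums_zero[OF ws wf] .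
  have "(\<Sum>j<k. c j) \<le> 0"
  proof (cases "f k \<le> E")
    case True
    have "c j \<le> 0" if "j < k" for j
    proof -
      have "f j \<le> E" using monoD[OF mono, of j k] that True by simp
      then show ?thesis unfolding c_def using w[of j] by (simp add: mult_nonneg_nonpos)
    qed
    then show ?thesis by (intro sum_nonpos) simp
  next
    case False
    have "c (m + k) \<ge> 0" for m
    proof -
      have "f (m + k) \<ge> E" using monoD[OF mono, of k "m + k"] False by simp
      then show ?thesis unfolding c_def using w[of "m + k"] by simp
    qed
    moreover have "(\<lambda>m. c (m + k)) sums (- (\<Sum>j<k. c j))"
      using c0 by (simp add: sums_iff_shift)
    ultimately have "0 \<le> - (\<Sum>j<k. c j)"
      by (metis sums_iff suminf_nonneg)
    then show ?thesis by simp
  qed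
  then show ?thesis by (simp add: c_def E_def)
qed

lemma negbin_prob_sums:
  fixes r p :: real
  assumes p: "0 < p" "p < 1"
  shows "negbin_prob r p sums 1"
proof -
  have "\<bar>-(1 - p)\<bar> < 1" using p by simp
  from gen_binomial_real[OF this, of "-r"]
  have "(\<lambda>k. ((-r) gchoose k) * (-(1 - p)) ^ k) sums p powr (-r)" by simp
  moreover have "((-r) gchoose k) * (-(1 - p)) ^ k = pochhammer r k / fact k * (1 - p) ^ k" for k
    by (simp add: gbinomial_pochhammer power_mult_distrib[symmetric] flip: power_minus)
  ultimately have "(\<lambda>k. p powr r * (pochhammer r k / fact k * (1 - p) ^ k)) sums (p powr r * p powr (-r))"
    by (intro sums_mult) simp
  moreover have "p powr r * p powr (-r) = 1"
    using p by (simp add: powr_minus)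
  moreover have "negbin_prob r p = (\<lambda>k. p powr r * (pochhammer r k / fact k * (1 - p) ^ k))"
    by (simp add: fun_eq_iff negbin_prob_def)
  ultimately show ?thesis
    by simp
qed

lemma negbin_prob_pos:
  fixes r p :: real
  assumes "0 < p" "p < 1" "r > 0"
  shows "negbin_prob r p k > 0"
  using assms pochhammer_pos[of r k] by (simp add: negbin_prob_def)

lemma negbin_prob_Suc:
  fixes r p :: real
  shows "real (Suc k) * negbin_prob r p (Suc k) = (1 - p) * (r + real k) * negbin_prob r p k"
  by (simp add: negbin_prob_def pochhammer_Suc field_simps del: of_nat_Suc)

text \<open>Size biasing \<open>N\<^sub>r\<^sub>,\<^sub>p\<close> gives \<open>1 + N\<^sub>r\<^sub>+\<^sub>1\<^sub>,\<^sub>p\<close>.\<close>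
lemma Suc_times_negbin_prob:
  fixes r p :: real
  assumes "0 < p"
  shows "real (Suc k) * negbin_prob r p (Suc k) = r * (1 - p) / p * negbin_prob (r + 1) p k"
proof -
  have "p powr (r + 1) = p powr r * p" using assms by (simp add: powr_add)
  then show ?thesis
    using assms by (simp add: negbin_prob_def pochhammer_rec field_simps del: of_nat_Suc)
qed

lemma negbin_mean_sums:
  fixes r p :: real
  assumes p: "0 < p" "p < 1"
  shows "(\<lambda>k. real k * negbin_prob r p k) sums (r * (1 - p) / p)"
proof -
  have "(\<lambda>k. r * (1 - p) / p * negbin_prob (r + 1) p k) sums (r * (1 - p) / p * 1)"
    by (intro sums_mult negbin_prob_sums p)
  then have "(\<lambda>k. real (Suc k) * negbin_prob r p (Suc k)) sums (r * (1 - p) / p)"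
    by (simp only: Suc_times_negbin_prob[OF p(1)] mult_1_right)
  then show ?thesis
    using sums_Suc_iff[of "\<lambda>k. real k * negbin_prob r p k"] by simp
qed

lemma negbin_partial_sum_centered:
  fixes r p :: real
  assumes p: "0 < p" "p < 1"
  shows "(\<Sum>j<k. negbin_prob r p j * (real j - r * (1 - p) / p)) = - real k * negbin_prob r p k / p"
proof (induction k)
  case 0
  then show ?case by simp
next
  case (Suc k)
  have "(\<Sum>j<Suc k. negbin_prob r p j * (real j - r * (1 - p) / p))
      = - ((1 - p) * (r + real k) * negbin_prob r p k) / p"
    using Suc p by (simp add: field_simps)
  also have "\<dots> = - real (Suc k) * negbin_prob r p (Suc k) / p"
    by (simp add: negbin_prob_Suc del: of_nat_Suc)
  finally show ?case .
qed

lemma summable_negbin_prob_mult: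
  fixes r p :: real and f :: "nat \<Rightarrow> real"
  assumes p: "0 < p" "p < 1" and r: "r > 0" and f: "\<And>j. \<bar>f j\<bar> \<le> real j"
  shows "summable (\<lambda>j. negbin_prob r p j * f j)"
proof (rule summable_comparison_test)
  show "summable (\<lambda>j. real j * negbin_prob r p j)"
    using negbin_mean_sums[OF p] by (rule sums_summable)
  show "\<exists>N. \<forall>j\<ge>N. norm (negbin_prob r p j * f j) \<le> real j * negbin_prob r p j"
    using f negbin_prob_pos[OF p r] by (auto simp: abs_mult abs_of_pos mult.commute intro!: mult_left_mono)
qed

lemma stein_g_eq_partial_sum:
  fixes r p z :: real
  assumes p: "0 < p" "p < 1" and r: "r > 0" and z: "z \<ge> 0" and k: "k \<ge> 1"
  shows "stein_g r p z k = (\<Sum>j<k. negbin_prob r p j * (max (real j - z) 0 - negbin_call r p z))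
            / (real k * negbin_prob r p k)"
proof -
  define w where "w = negbin_prob r p"
  define F where "F = (\<lambda>j. w j * (max (real j - z) 0 - negbin_call r p z))"
  define D where "D = real k * w k"
  have "summable (\<lambda>j. w j * max (real j - z) 0)"
    unfolding w_def using z by (intro summable_negbin_prob_mult[OF p r]) auto
  then have "F sums 0"
    unfolding F_def negbin_call_def w_def[symmetric]
    by (intro centered_sums_zero) (simp add: w_def negbin_prob_sums p)
  then have tail: "(\<lambda>m. F (m + k)) sums (- (\<Sum>j<k. F j))"
    by (simp add: sums_iff_shift)
  have coeff: "pochhammer r (k + m) / pochhammer r k * fact (k - 1) / fact (k + m) * (1 - p) ^ (k + m - k)
        = w (k + m) / D" for m
  proof -
    have "fact k = real k * fact (k - 1)" using k by (simp add: fact_reduce)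
    moreover have "p powr r > 0" "pochhammer r k > 0" using p r by (simp_all add: pochhammer_pos)
    ultimately show ?thesis unfolding D_def w_def negbin_prob_def
      using p k by (simp add: field_simps power_add)
  qed
  have "(\<lambda>m. let j = k + m in pochhammer r j / pochhammer r k * fact (k - 1) / fact j * (1 - p) ^ (j - k)
          * (max (real j - z) 0 - negbin_call r p z)) = (\<lambda>m. F (m + k) / D)"
    by (rule ext) (simp only: Let_def coeff, simp add: F_def add.commute)
  then have "stein_g r p z k = - (\<Sum>m. F (m + k) / D)"
    using k by (simp add: stein_g_def)
  also have "\<dots> = (\<Sum>j<k. F j) / D"
    using sums_divide[OF tail, of D] by (simp add: sums_iff)
  finally show ?thesis unfolding F_def D_def w_def .
qed

lemma negbin_call_partial_sum_nonpos:
  fixes r p z :: real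
  assumes p: "0 < p" "p < 1" and r: "r > 0" and z: "z \<ge> 0"
  shows "(\<Sum>j<k. negbin_prob r p j * (max (real j - z) 0 - negbin_call r p z)) \<le> 0"
  unfolding negbin_call_def
proof (rule partial_sum_centered_mono_nonpos)
  show "summable (\<lambda>j. negbin_prob r p j * max (real j - z) 0)"
    using z by (intro summable_negbin_prob_mult[OF p r]) auto
qed (use p r negbin_prob_pos negbin_prob_sums in \<open>auto intro!: monoI simp: less_imp_le\<close>)

lemma negbin_call_partial_sum_lower:
  fixes r p z :: real
  assumes p: "0 < p" "p < 1" and r: "r > 0" and z: "z \<ge> 0"
  shows "- real k * negbin_prob r p k / p
    \<le> (\<Sum>j<k. negbin_prob r p j * (max (real j - z) 0 - negbin_call r p z))"
proof -
  define w where "w = negbin_prob r p"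
  define \<mu> where "\<mu> = r * (1 - p) / p"
  define U where "U = (\<Sum>j. w j * min (real j) z)"
  have mean: "(\<lambda>j. w j * real j) sums \<mu>"
    unfolding w_def \<mu>_def using negbin_mean_sums[OF p] by (simp add: mult.commute)
  have sU: "summable (\<lambda>j. w j * min (real j) z)"
    unfolding w_def using z by (intro summable_negbin_prob_mult[OF p r]) auto
  have split: "max (real j - z) 0 = real j - min (real j) z" for j
    using z by auto
  have "negbin_call r p z = (\<Sum>j. w j * real j - w j * min (real j) z)"
    unfolding negbin_call_def w_def[symmetric] split by (simp add: right_diff_distrib)
  also have "\<dots> = \<mu> - U"
    unfolding U_def using mean sU by (subst suminf_diff[symmetric]) (auto simp: sums_iff)
  finally have call: "negbin_call r p z = \<mu> - U" .
  have cheb: "(\<Sum>j<k. w j * (min (real j) z - U)) \<le> 0"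
    unfolding U_def w_def using sU p r negbin_prob_pos negbin_prob_sums
    by (intro partial_sum_centered_mono_nonpos) (auto intro!: monoI simp: w_def less_imp_le)
  have "(\<Sum>j<k. w j * (max (real j - z) 0 - negbin_call r p z))
      = (\<Sum>j<k. w j * (real j - \<mu>)) - (\<Sum>j<k. w j * (min (real j) z - U))"
    unfolding call split by (simp add: sum_subtractf[symmetric] algebra_simps)
  also have "(\<Sum>j<k. w j * (real j - \<mu>)) = - real k * w k / p"
    unfolding w_def \<mu>_def by (rule negbin_partial_sum_centered[OF p])
  finally show ?thesis using cheb unfolding w_def by simp
qed

lemma stein_g_bounds:
  fixes r p z :: real
  assumes p: "0 < p" "p < 1" and r: "r > 0" and z: "z \<ge> 0" and k: "k \<ge> 1"
  shows "- 1 / p \<le> stein_g r p z k" and "stein_g r p z k \<le> 0"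
proof -
  have D: "real k * negbin_prob r p k > 0"
    using k negbin_prob_pos[OF p r] by simp
  show "stein_g r p z k \<le> 0"
    unfolding stein_g_eq_partial_sum[OF assms]
    using negbin_call_partial_sum_nonpos[OF p r z] D by (simp add: divide_nonpos_pos)
  show "- 1 / p \<le> stein_g r p z k"
    unfolding stein_g_eq_partial_sum[OF assms]
    using negbin_call_partial_sum_lower[OF p r z, of k] D p by (simp add: field_simps)
qed

lemma stein_weight_nonneg:
  fixes p q :: real
  assumes "0 \<le> p" "p \<le> 1" "0 \<le> q" "q \<le> 1"
  shows "0 \<le> q * (1 - p * (1 - q))"
proof -
  have "p * (1 - q) \<le> 1 * 1" using assms by (intro mult_mono) auto
  then show ?thesis using assms by simp
qed

abbreviation bernoulli_Pi_pmf :: "'a set \<Rightarrow> ('a \<Rightarrow> real) \<Rightarrow> ('a \<Rightarrow> bool) pmf" where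
  "bernoulli_Pi_pmf A q \<equiv> Pi_pmf A False (\<lambda>i. bernoulli_pmf (q i))"

definition count_true :: "'a set \<Rightarrow> ('a \<Rightarrow> bool) \<Rightarrow> nat" where
  "count_true A w = (\<Sum>j\<in>A. of_bool (w j))"

lemma finite_set_bernoulli_Pi_pmf:
  "finite A \<Longrightarrow> finite (set_pmf (bernoulli_Pi_pmf A q))"
  by (subst set_Pi_pmf) (auto intro!: finite_PiE_dflt)

lemma integrable_bernoulli_Pi_pmf [simp]:
  "finite A \<Longrightarrow> integrable (measure_pmf (bernoulli_Pi_pmf A q)) (f :: _ \<Rightarrow> real)"
  by (rule integrable_measure_pmf_finite[OF finite_set_bernoulli_Pi_pmf])

lemma expectation_pair_bernoulli_pmf:
  fixes G :: "bool \<times> 'a \<Rightarrow> real"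
  assumes M: "finite (set_pmf M)" and a: "0 \<le> a" "a \<le> 1"
  shows "measure_pmf.expectation (pair_pmf (bernoulli_pmf a) M) G
     = a * measure_pmf.expectation M (\<lambda>x. G (True, x))
       + (1 - a) * measure_pmf.expectation M (\<lambda>x. G (False, x))"
proof -
  have "measure_pmf.expectation (pair_pmf (bernoulli_pmf a) M) G
       = (\<Sum>x\<in>UNIV \<times> set_pmf M. pmf (pair_pmf (bernoulli_pmf a) M) x * G x)"
    using M by (subst integral_measure_pmf) (auto simp: set_pair_pmf)
  also have "\<dots> = (\<Sum>b\<in>UNIV. \<Sum>x\<in>set_pmf M. pmf (bernoulli_pmf a) b * pmf M x * G (b, x))"
    unfolding sum.cartesian_product by (intro sum.cong) (auto simp: pmf_pair)
  also have "\<dots> = a * (\<Sum>x\<in>set_pmf M. pmf M x * G (True, x))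
                 + (1 - a) * (\<Sum>x\<in>set_pmf M. pmf M x * G (False, x))"
    using a by (simp add: UNIV_bool sum_distrib_left mult_ac)
  finally show ?thesis
    using M by (simp add: integral_measure_pmf[OF M])
qed

lemma expectation_bernoulli_Pi_pmf_insert:
  fixes F :: "('a \<Rightarrow> bool) \<Rightarrow> real"
  assumes "finite A" "i \<notin> A" and "0 \<le> q i" "q i \<le> 1"
  shows "measure_pmf.expectation (bernoulli_Pi_pmf (insert i A) q) F
    = q i * measure_pmf.expectation (bernoulli_Pi_pmf A q) (\<lambda>w. F (w(i := True)))
      + (1 - q i) * measure_pmf.expectation (bernoulli_Pi_pmf A q) (\<lambda>w. F (w(i := False)))"
  using assms
  by (simp add: Pi_pmf_insert case_prod_unfold expectation_pair_bernoulli_pmf finite_set_bernoulli_Pi_pmf)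

lemma count_true_fun_upd:
  assumes "finite A" "i \<in> A"
  shows "count_true A (w(i := b)) = of_bool b + count_true (A - {i}) w"
proof -
  have "count_true A (w(i := b)) = of_bool b + count_true (A - {i}) (w(i := b))"
    unfolding count_true_def by (subst sum.remove[OF assms]) (simp only: fun_upd_same)
  also have "count_true (A - {i}) (w(i := b)) = count_true (A - {i}) w"
    unfolding count_true_def by (intro sum.cong) auto
  finally show ?thesis .
qed

lemma expectation_bernoulli_Pi_pmf_condition:
  fixes H :: "bool \<Rightarrow> nat \<Rightarrow> real"
  assumes A: "finite A" "i \<in> A" and q: "0 \<le> q i" "q i \<le> 1"
  shows "measure_pmf.expectation (bernoulli_Pi_pmf A q) (\<lambda>w. H (w i) (count_true A w))
    = q i * measure_pmf.expectation (bernoulli_Pi_pmf (A - {i}) q) (\<lambda>w. H True (Suc (count_true (A - {i}) w)))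
      + (1 - q i) * measure_pmf.expectation (bernoulli_Pi_pmf (A - {i}) q) (\<lambda>w. H False (count_true (A - {i}) w))"
proof -
  have "A = insert i (A - {i})" using A by auto
  then have "measure_pmf.expectation (bernoulli_Pi_pmf A q) (\<lambda>w. H (w i) (count_true A w))
     = measure_pmf.expectation (bernoulli_Pi_pmf (insert i (A - {i})) q) (\<lambda>w. H (w i) (count_true A w))"
    by simp
  also have "\<dots> = q i * measure_pmf.expectation (bernoulli_Pi_pmf (A - {i}) q) (\<lambda>w. H True (count_true A (w(i := True))))
      + (1 - q i) * measure_pmf.expectation (bernoulli_Pi_pmf (A - {i}) q) (\<lambda>w. H False (count_true A (w(i := False))))"
    using A q by (subst expectation_bernoulli_Pi_pmf_insert) auto
  finally show ?thesis using A by (simp add: count_true_fun_upd)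
qed

lemma expectation_stein_op_bernoulli_count:
  fixes g :: "nat \<Rightarrow> real" and A :: "'a set" and r p :: real
  assumes A: "finite A" and q: "\<And>i. i \<in> A \<Longrightarrow> 0 \<le> q i \<and> q i \<le> 1"
    and rel: "r * (1 - p) = p * (\<Sum>i\<in>A. q i)"
  shows "measure_pmf.expectation (bernoulli_Pi_pmf A q) (\<lambda>w. stein_op r p g (count_true A w))
    = (\<Sum>i\<in>A. q i * (1 - p * (1 - q i)) * measure_pmf.expectation (bernoulli_Pi_pmf (A - {i}) q)
          (\<lambda>w. g (count_true (A - {i}) w + 2) - g (count_true (A - {i}) w + 1)))"
proof -
  let ?E = "measure_pmf.expectation (bernoulli_Pi_pmf A q)"
  let ?E' = "\<lambda>i. measure_pmf.expectation (bernoulli_Pi_pmf (A - {i}) q)"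
  define a where "a i = ?E' i (\<lambda>w. g (count_true (A - {i}) w + 2))" for i
  define b where "b i = ?E' i (\<lambda>w. g (count_true (A - {i}) w + 1))" for i
  have cond: "?E (\<lambda>w. H (w i) (count_true A w)) = q i * ?E' i (\<lambda>w. H True (Suc (count_true (A - {i}) w)))
      + (1 - q i) * ?E' i (\<lambda>w. H False (count_true (A - {i}) w))" if "i \<in> A" for i H
    using expectation_bernoulli_Pi_pmf_condition[OF A that] q[OF that] by simp
  have G: "?E (\<lambda>w. g (Suc (count_true A w))) = q i * a i + (1 - q i) * b i" if "i \<in> A" for i
    using cond[OF that, of "\<lambda>_ k. g (Suc k)"] by (simp add: a_def b_def)
  have up: "?E (\<lambda>w. of_bool (w i) * g (Suc (count_true A w))) = q i * a i" if "i \<in> A" for i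
    using cond[OF that, of "\<lambda>c k. of_bool c * g (Suc k)"] by (simp add: a_def)
  have stay: "?E (\<lambda>w. of_bool (w i) * g (count_true A w)) = q i * b i" if "i \<in> A" for i
    using cond[OF that, of "\<lambda>c k. of_bool c * g k"] by (simp add: b_def)
  have "(\<lambda>w. stein_op r p g (count_true A w)) = (\<lambda>w. (1 - p) * r * g (Suc (count_true A w))
        + ((1 - p) * (\<Sum>i\<in>A. of_bool (w i) * g (Suc (count_true A w)))
           - (\<Sum>i\<in>A. of_bool (w i) * g (count_true A w))))"
    by (simp add: stein_op_def count_true_def algebra_simps sum_distrib_left sum_distrib_right)
  then have "?E (\<lambda>w. stein_op r p g (count_true A w))
      = (1 - p) * r * ?E (\<lambda>w. g (Suc (count_true A w)))
        + ((1 - p) * (\<Sum>i\<in>A. q i * a i) - (\<Sum>i\<in>A. q i * b i))"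
    using A by (simp add: integral_sum up stay del: sum_of_bool_mult_eq cong: sum.cong)
  also have "(1 - p) * r * ?E (\<lambda>w. g (Suc (count_true A w))) = (\<Sum>i\<in>A. p * q i * (q i * a i + (1 - q i) * b i))"
    using rel G by (simp add: sum_distrib_left sum_distrib_right mult_ac cong: sum.cong)
  also have "(\<Sum>i\<in>A. p * q i * (q i * a i + (1 - q i) * b i)) + ((1 - p) * (\<Sum>i\<in>A. q i * a i) - (\<Sum>i\<in>A. q i * b i))
     = (\<Sum>i\<in>A. q i * (1 - p * (1 - q i)) * (a i - b i))"
    by (simp add: sum_distrib_left algebra_simps sum.distrib sum_subtractf)
  finally show ?thesis
    using A by (simp add: a_def b_def)
qed

lemma abs_expectation_stein_op_bernoulli_count_le:
  fixes g :: "nat \<Rightarrow> real" and A :: "'a set" and r p M :: real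
  assumes A: "finite A" and q: "\<And>i. i \<in> A \<Longrightarrow> 0 \<le> q i \<and> q i \<le> 1"
    and p: "0 \<le> p" "p \<le> 1" and rel: "r * (1 - p) = p * (\<Sum>i\<in>A. q i)"
    and M: "\<And>k. \<bar>g (k + 2) - g (k + 1)\<bar> \<le> M"
  shows "\<bar>measure_pmf.expectation (bernoulli_Pi_pmf A q) (\<lambda>w. stein_op r p g (count_true A w))\<bar>
    \<le> M * (\<Sum>i\<in>A. q i * (1 - p * (1 - q i)))"
proof -
  let ?c = "\<lambda>i. q i * (1 - p * (1 - q i))"
  let ?d = "\<lambda>i. measure_pmf.expectation (bernoulli_Pi_pmf (A - {i}) q)
          (\<lambda>w. g (count_true (A - {i}) w + 2) - g (count_true (A - {i}) w + 1))"
  have c: "?c i \<ge> 0" if "i \<in> A" for i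
    using q[OF that] p by (simp add: stein_weight_nonneg)
  have d: "\<bar>?d i\<bar> \<le> M" for i
  proof -
    have "\<bar>?d i\<bar> \<le> measure_pmf.expectation (bernoulli_Pi_pmf (A - {i}) q)
          (\<lambda>w. \<bar>g (count_true (A - {i}) w + 2) - g (count_true (A - {i}) w + 1)\<bar>)"
      by (rule integral_abs_bound)
    also have "\<dots> \<le> M"
      using A M by (intro measure_pmf.integral_le_const) auto
    finally show ?thesis .
  qed
  have "\<bar>?c i * ?d i\<bar> \<le> ?c i * M" if "i \<in> A" for i
    using mult_left_mono[OF d c[OF that]] by (simp only: abs_mult[of "?c i"] abs_of_nonneg[OF c[OF that]])
  then have "\<bar>\<Sum>i\<in>A. ?c i * ?d i\<bar> \<le> (\<Sum>i\<in>A. ?c i * M)"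
    by (intro order.trans[OF sum_abs] sum_mono)
  then show ?thesis
    using expectation_stein_op_bernoulli_count[OF A q rel] by (simp add: sum_distrib_left mult_ac)
qed

lemma expectation_bern_sum_pmf:
  fixes f :: "nat \<Rightarrow> real"
  shows "measure_pmf.expectation (bern_sum_pmf n ps) f
    = measure_pmf.expectation (bernoulli_Pi_pmf {1..n} ps) (\<lambda>w. f (count_true {1..n} w))"
  by (simp add: bern_sum_pmf_def count_true_def)

theorem mainTheorem5:
  fixes n :: nat and ps :: "nat \<Rightarrow> real" and r p :: real
  assumes ps: "\<And>i. i \<in> {1..n} \<Longrightarrow> 0 \<le> ps i \<and> ps i \<le> 1"
    and r: "r > 1" and p: "0 < p" "p < 1"
    and rel: "r * (1 - p) = p * (\<Sum>i\<in>{1..n}. ps i)"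
  shows "\<forall>z\<ge>0. \<bar>measure_pmf.expectation (bern_sum_pmf n ps) (stein_op r p (stein_g r p z))\<bar>
           \<le> (2 * p powr (-(r + 1)) - 1 / p) * (\<Sum>i\<in>{1..n}. ps i * (1 - p * (1 - ps i)))"
proof (intro allI impI)
  fix z :: real
  assume z: "z \<ge> 0"
  have r0: "r > 0" using r by simp
  have "\<bar>stein_g r p z (k + 2) - stein_g r p z (k + 1)\<bar> \<le> 1 / p" for k
    using stein_g_bounds[OF p r0 z, where k = "k + 2"] stein_g_bounds[OF p r0 z, where k = "k + 1"]
    by auto
  then have "\<bar>measure_pmf.expectation (bern_sum_pmf n ps) (stein_op r p (stein_g r p z))\<bar>
      \<le> 1 / p * (\<Sum>i\<in>{1..n}. ps i * (1 - p * (1 - ps i)))"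
    unfolding expectation_bern_sum_pmf
    by (intro abs_expectation_stein_op_bernoulli_count_le) (use ps p rel in auto)
  also have "\<dots> \<le> (2 * p powr (-(r + 1)) - 1 / p) * (\<Sum>i\<in>{1..n}. ps i * (1 - p * (1 - ps i)))"
  proof (rule mult_right_mono)
    have "p powr (-1) \<le> p powr (-(r + 1))"
      using p r by (intro powr_mono') auto
    then show "1 / p \<le> 2 * p powr (-(r + 1)) - 1 / p"
      using p by (simp add: powr_minus_divide)
    show "0 \<le> (\<Sum>i\<in>{1..n}. ps i * (1 - p * (1 - ps i)))"
      using ps p by (intro sum_nonneg stein_weight_nonneg) auto
  qed
  finally show "\<bar>measure_pmf.expectation (bern_sum_pmf n ps) (stein_op r p (stein_g r p z))\<bar>
      \<le> (2 * p powr (-(r + 1)) - 1 / p) * (\<Sum>i\<in>{1..n}. ps i * (1 - p * (1 - ps i)))" .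
qed

end
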